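(* For every $m\in\mathbb{N}$ and $\boldsymbol{X}\in\mathbb{N}^m$, $$\frac{\|\widehat{\boldsymbol{\mu}}_m\|_{1/2}^{1/2}}{\sqrt{2\pi m}}-\frac32\sqrt{\frac1{2\pi}}\frac{1}{m^{3/2}}N(\widehat{\boldsymbol{\mu}}_m)\le\hat{\mathfrak{R}}_m(\boldsymbol{X})\le\frac{\|\widehat{\boldsymbol{\mu}}_m\|_{1/2}^{1/2}}{\sqrt{2\pi m}}+\sqrt{\frac1{2\pi}}\frac{1}{m^{3/2}}N(\widehat{\boldsymbol{\mu}}_m),$$ where $N(\widehat{\boldsymbol{\mu}}_m):=\sum_{x\in\mathbb{N}:\,\widehat{\boldsymbol{\mu}}_m(x)>0}\widehat{\boldsymbol{\mu}}_m(x)^{-1/2}$.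
   Context: $\widehat{\boldsymbol{\mu}}_m(i)=\frac1m\sum_{t=1}^m\mathbb{I}\{X_t=i\}$. $\|\boldsymbol{\mu}\|_{1/2}=(\sum_i\sqrt{\boldsymbol{\mu}(i)})^2$. $\hat{\mathfrak{R}}_m(\boldsymbol{X})=\mathbb{E}_{\boldsymbol{\sigma}}\big[\sup_{f:\mathbb{N}\to\{0,1\}}\frac1m\sum_{t=1}^m\sigma_tf(X_t)\big]$ with $\boldsymbol{\sigma}$ uniform on $\{-1,1\}^m$. *)

theory Defs
  imports "HOL-Analysis.Analysis"
begin

text \<open>Sample X = (X 1, ..., X m) of natural numbers, encoded as X :: nat => nat
  on indices 1..m.\<close>

definition emp_dist :: "nat \<Rightarrow> (nat \<Rightarrow> nat) \<Rightarrow> nat \<Rightarrow> real" where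
  "emp_dist m X i = (\<Sum>t=1..m. (if X t = i then 1 else 0)) / real m"

definition half_norm :: "(nat \<Rightarrow> real) \<Rightarrow> real" where
  "half_norm mu = (\<Sum>i\<in>{i. 0 < mu i}. sqrt (mu i))\<^sup>2"

definition Nfun :: "(nat \<Rightarrow> real) \<Rightarrow> real" where
  "Nfun mu = (\<Sum>x\<in>{x. 0 < mu x}. mu x powr (-1/2))"

text \<open>Empirical Rademacher complexity of the class of all f : N -> {0,1};
  the expectation over sigma uniform on {-1,1}^m is the average over all
  sign vectors indexed by 1..m.\<close>
definition emp_rademacher :: "nat \<Rightarrow> (nat \<Rightarrow> nat) \<Rightarrow> real" where
  "emp_rademacher m X =
     (\<Sum>\<sigma>\<in>({1..m} \<rightarrow>\<^sub>E {-1::real, 1}).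
        (SUP f\<in>{f::nat \<Rightarrow> real. \<forall>x. f x \<in> {0,1}}.
           (1 / real m) * (\<Sum>t=1..m. \<sigma> t * f (X t)))) / 2 ^ m"

end

theory Submission
  imports Defs "HOL-Real_Asymp.Real_Asymp"
begin

(* For a fixed sign vector, the supremum over binary f is attained by the indicator of the values i
   whose sign sum S_i = (sum of the signs at the positions t with X_t = i) is positive, so the
   empirical Rademacher complexity is (1/m) times the sum over the atoms i of E max(0, S_i) = E|S_i|/2.
   S_i is a sum of n_i = m mu(i) independent uniform signs, and E|S_n| = n c_k with
   c_k = binom(2k, k) / 4^k, k = n div 2.  Wallis' product squeezes 2/(pi (2k+1)) <= c_k^2 <= 1/(pi k),
   which gives sqrt n - 1/(2 sqrt n) <= sqrt(pi/2) E|S_n| <= sqrt n + 1/sqrt n; summing these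
   bounds over the atoms gives the theorem. *)

definition central_binom_ratio :: "nat \<Rightarrow> real" where
  "central_binom_ratio k = real ((2 * k) choose k) / 4 ^ k"

lemma central_binom_ratio_Suc:
  "central_binom_ratio (Suc k) = central_binom_ratio k * (2 * real k + 1) / (2 * real k + 2)"
proof -
  have "Suc k * (2 * Suc k choose Suc k) = Suc k * (2 * (Suc (2 * k) choose k))"
    using Suc_times_binomial[of k "Suc (2 * k)"] by (simp del: binomial_Suc_Suc)
  then have absorb: "2 * Suc k choose Suc k = 2 * (Suc (2 * k) choose k)"
    by (metis Zero_not_Suc mult_left_cancel)
  have "Suc k * (Suc (2 * k) choose k) = Suc (2 * k) * (2 * k choose k)"
    using Suc_times_binomial_eq[of "2 * k" k] binomial_symmetric[of k "Suc (2 * k)"]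
    by (simp del: binomial_Suc_Suc)
  from arg_cong[where f = real, OF this]
  have "real (2 * Suc k choose Suc k) * (2 * real k + 2) = 4 * real (2 * k choose k) * (2 * real k + 1)"
    unfolding absorb by (simp add: algebra_simps del: binomial_Suc_Suc)
  \<comment> \<open>Over atoms a, q, field_simps need not see that a polynomial in k is nonzero.\<close>
  moreover have "x / (4 * q) = c / q * b / a" if "x * a = 4 * c * b" "a \<noteq> 0" "q \<noteq> 0"
    for x c a b q :: real
    using that by (simp add: field_simps)
  ultimately show ?thesis
    unfolding central_binom_ratio_def by simp
qed

lemma central_binom_ratio_sq_wallis:
  "central_binom_ratio k ^ 2 * (2 * real k + 1) * (\<Prod>j=1..k. 4 * real j ^ 2 / (4 * real j ^ 2 - 1)) = 1"
proof (induction k)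
  case 0
  then show ?case by (simp add: central_binom_ratio_def)
next
  case (Suc k)
  define P where "P = (\<Prod>j=1..k. 4 * real j ^ 2 / (4 * real j ^ 2 - 1))"
  define c where "c = central_binom_ratio k"
  define x where "x = real k"
  have x: "x \<ge> 0" unfolding x_def by simp
  have cancel: "(c * a / b) ^ 2 * d * (b ^ 2 / (a * d) * P) = c ^ 2 * a * P"
    if "a \<noteq> 0" "b \<noteq> 0" "d \<noteq> 0" for a b d :: real
    using that by (simp add: field_simps power2_eq_square)
  have "(\<Prod>j=1..Suc k. 4 * real j ^ 2 / (4 * real j ^ 2 - 1))
      = (2 * x + 2) ^ 2 / ((2 * x + 1) * (2 * x + 3)) * P"
    unfolding P_def x_def by (subst prod.nat_ivl_Suc') (simp_all add: algebra_simps power2_eq_square)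
  moreover have "central_binom_ratio (Suc k) = c * (2 * x + 1) / (2 * x + 2)"
    "2 * real (Suc k) + 1 = 2 * x + 3"
    unfolding c_def x_def by (simp_all add: central_binom_ratio_Suc)
  ultimately have "central_binom_ratio (Suc k) ^ 2 * (2 * real (Suc k) + 1)
      * (\<Prod>j=1..Suc k. 4 * real j ^ 2 / (4 * real j ^ 2 - 1))
      = (c * (2 * x + 1) / (2 * x + 2)) ^ 2 * (2 * x + 3) * ((2 * x + 2) ^ 2 / ((2 * x + 1) * (2 * x + 3)) * P)"
    by (simp only:)
  also have "\<dots> = c ^ 2 * (2 * x + 1) * P"
    using x by (intro cancel) simp_all
  also have "\<dots> = 1"
    using Suc by (simp add: P_def c_def x_def)
  finally show ?case .
qed

lemma tendsto_central_binom_ratio_sq: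
  "(\<lambda>k. central_binom_ratio k ^ 2 * (2 * real k + 1)) \<longlonglongrightarrow> 2 / pi"
proof -
  have "(\<lambda>k. inverse (\<Prod>j=1..k. 4 * real j ^ 2 / (4 * real j ^ 2 - 1))) \<longlonglongrightarrow> inverse (pi / 2)"
    by (intro tendsto_inverse wallis) simp
  moreover have "inverse (\<Prod>j=1..k. 4 * real j ^ 2 / (4 * real j ^ 2 - 1))
      = central_binom_ratio k ^ 2 * (2 * real k + 1)" for k
    using central_binom_ratio_sq_wallis[of k] by (intro inverse_unique) (simp add: mult.commute)
  ultimately show ?thesis by simp
qed

lemma decseq_central_binom_ratio_sq: "decseq (\<lambda>k. central_binom_ratio k ^ 2 * (2 * real k + 1))"
proof (rule decseq_SucI)
  fix k
  define c where "c = central_binom_ratio k"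
  define x where "x = real k"
  have x: "x \<ge> 0" unfolding x_def by simp
  have "central_binom_ratio (Suc k) = c * (2 * x + 1) / (2 * x + 2)"
    "2 * real (Suc k) + 1 = 2 * x + 3"
    unfolding c_def x_def by (simp_all add: central_binom_ratio_Suc)
  then have "central_binom_ratio (Suc k) ^ 2 * (2 * real (Suc k) + 1)
      = (c * (2 * x + 1) / (2 * x + 2)) ^ 2 * (2 * x + 3)"
    by (simp only:)
  also have "\<dots> = c ^ 2 * (2 * x + 1) * ((2 * x + 1) * (2 * x + 3) / (2 * x + 2) ^ 2)"
    by (simp add: power_divide power_mult_distrib power2_eq_square)
  also have "\<dots> \<le> c ^ 2 * (2 * x + 1) * 1"
  proof (rule mult_left_mono)
    have "(2 * x + 1) * (2 * x + 3) \<le> (2 * x + 2) ^ 2"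
      by (simp add: power2_eq_square algebra_simps)
    then show "(2 * x + 1) * (2 * x + 3) / (2 * x + 2) ^ 2 \<le> 1"
      using x by (subst divide_le_eq_1_pos) auto
  qed (use x in simp)
  finally show "central_binom_ratio (Suc k) ^ 2 * (2 * real (Suc k) + 1)
      \<le> central_binom_ratio k ^ 2 * (2 * real k + 1)"
    by (simp add: c_def x_def)
qed

lemma incseq_central_binom_ratio_sq: "incseq (\<lambda>k. central_binom_ratio k ^ 2 * (2 * real k))"
proof (rule incseq_SucI)
  fix k
  define c where "c = central_binom_ratio k"
  define x where "x = real k"
  have x: "x \<ge> 0" unfolding x_def by simp
  have "2 * x \<le> (2 * x + 1) ^ 2 / (2 * x + 2)"
    using x by (subst pos_le_divide_eq) (auto simp: power2_eq_square algebra_simps)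
  then have "c ^ 2 * (2 * x) \<le> c ^ 2 * ((2 * x + 1) ^ 2 / (2 * x + 2))"
    by (rule mult_left_mono) simp
  also have "\<dots> = (c * (2 * x + 1) / (2 * x + 2)) ^ 2 * (2 * x + 2)"
    using x by (simp add: power_divide power_mult_distrib power2_eq_square)
  also have "central_binom_ratio (Suc k) = c * (2 * x + 1) / (2 * x + 2)"
    "2 * real (Suc k) = 2 * x + 2"
    unfolding c_def x_def by (simp_all add: central_binom_ratio_Suc)
  then have "(c * (2 * x + 1) / (2 * x + 2)) ^ 2 * (2 * x + 2)
      = central_binom_ratio (Suc k) ^ 2 * (2 * real (Suc k))"
    by (simp only:)
  finally show "central_binom_ratio k ^ 2 * (2 * real k)
      \<le> central_binom_ratio (Suc k) ^ 2 * (2 * real (Suc k))"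
    by (simp add: c_def x_def)
qed

lemma central_binom_ratio_sq_lower: "2 \<le> pi * (2 * real k + 1) * central_binom_ratio k ^ 2"
proof -
  have "2 / pi \<le> central_binom_ratio k ^ 2 * (2 * real k + 1)"
    using decseq_ge[OF decseq_central_binom_ratio_sq tendsto_central_binom_ratio_sq] by simp
  then show ?thesis
    by (simp add: divide_le_eq mult_ac)
qed

lemma central_binom_ratio_sq_upper: "pi * real k * central_binom_ratio k ^ 2 \<le> 1"
proof -
  have "(\<lambda>k. central_binom_ratio k ^ 2 * (2 * real k + 1) * (2 * real k / (2 * real k + 1)))
      \<longlonglongrightarrow> 2 / pi * 1"
    by (intro tendsto_mult tendsto_central_binom_ratio_sq) real_asymp
  moreover have "central_binom_ratio k ^ 2 * (2 * real k + 1) * (2 * real k / (2 * real k + 1))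
      = central_binom_ratio k ^ 2 * (2 * real k)" for k
    by (simp add: field_simps)
  ultimately have "(\<lambda>k. central_binom_ratio k ^ 2 * (2 * real k)) \<longlonglongrightarrow> 2 / pi"
    by simp
  then have "central_binom_ratio k ^ 2 * (2 * real k) \<le> 2 / pi"
    using incseq_le[OF incseq_central_binom_ratio_sq] by simp
  then show ?thesis
    by (simp add: le_divide_eq mult_ac)
qed

(* The sum of g (sigma_1 + ... + sigma_n) over all 2^n sign vectors; j counts the entries +1. *)
definition walk_sum :: "nat \<Rightarrow> (int \<Rightarrow> real) \<Rightarrow> real" where
  "walk_sum n g = (\<Sum>j\<le>n. real (n choose j) * g (2 * int j - int n))"

lemma walk_sum_Suc: "walk_sum (Suc n) g = walk_sum n (\<lambda>x. g (x + 1)) + walk_sum n (\<lambda>x. g (x - 1))"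
proof -
  have "walk_sum (Suc n) g = (\<Sum>j\<le>Suc n. real (Suc n choose j) * g (2 * int j - int n - 1))"
    unfolding walk_sum_def by (simp add: algebra_simps)
  also have "\<dots> = g (- int n - 1) + (\<Sum>j\<le>n. real (n choose j) * g (2 * int j - int n + 1))
      + (\<Sum>j\<le>n. real (n choose Suc j) * g (2 * int (Suc j) - int n - 1))"
    by (subst sum.atMost_Suc_shift) (simp add: sum.distrib algebra_simps)
  also have "(\<Sum>j\<le>n. real (n choose Suc j) * g (2 * int (Suc j) - int n - 1))
      = (\<Sum>j\<le>Suc n. real (n choose j) * g (2 * int j - int n - 1)) - g (- int n - 1)"
    using sum.atMost_Suc_shift[of "\<lambda>j. real (n choose j) * g (2 * int j - int n - 1)" n] by simp
  also have "(\<Sum>j\<le>Suc n. real (n choose j) * g (2 * int j - int n - 1))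
      = (\<Sum>j\<le>n. real (n choose j) * g (2 * int j - int n - 1))"
    by (simp add: sum.atMost_Suc)
  finally show ?thesis
    unfolding walk_sum_def by (simp add: algebra_simps)
qed

lemma walk_sum_add: "walk_sum n (\<lambda>x. f x + g x) = walk_sum n f + walk_sum n g"
  unfolding walk_sum_def by (simp add: sum.distrib algebra_simps)

lemma walk_sum_cmult: "walk_sum n (\<lambda>x. c * f x) = c * walk_sum n f"
  unfolding walk_sum_def by (simp add: sum_distrib_left algebra_simps)

lemma walk_sum_const: "walk_sum n (\<lambda>x. c) = 2 ^ n * c"
proof -
  have "(\<Sum>j\<le>n. real (n choose j)) = 2 ^ n"
    using choose_row_sum[of n] by (metis of_nat_numeral of_nat_power of_nat_sum)
  then show ?thesis
    unfolding walk_sum_def by (simp flip: sum_distrib_right)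
qed

lemma walk_sum_of_int: "walk_sum n real_of_int = 0"
proof (induction n)
  case 0
  then show ?case by (simp add: walk_sum_def)
next
  case (Suc n)
  then show ?case
    using walk_sum_add[of n real_of_int "\<lambda>_. 1"] walk_sum_add[of n real_of_int "\<lambda>_. -1"]
    by (simp add: walk_sum_Suc walk_sum_const)
qed

lemma walk_sum_indicator_0:
  "walk_sum n (\<lambda>x. of_bool (x = 0)) = of_bool (even n) * real (n choose (n div 2))"
proof -
  have "(2 * int j - int n = 0) \<longleftrightarrow> even n \<and> j = n div 2" for j
    by auto presburger+
  then have "walk_sum n (\<lambda>x. of_bool (x = 0))
      = (\<Sum>j\<le>n. if even n \<and> j = n div 2 then real (n choose j) else 0)"
    unfolding walk_sum_def by (intro sum.cong) auto
  then show ?thesis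
    by (simp add: sum.delta' sum.If_cases)
qed

(* Closed form of E|sigma_1 + ... + sigma_n| for independent uniform signs sigma_t. *)
definition mean_abs_walk :: "nat \<Rightarrow> real" where
  "mean_abs_walk n = real n * central_binom_ratio (n div 2)"

lemma mean_abs_walk_Suc:
  "mean_abs_walk (Suc n) = mean_abs_walk n + of_bool (even n) * real (n choose (n div 2)) / 2 ^ n"
proof (cases "even n")
  case True
  then obtain k where n: "n = 2 * k" by blast
  have "real ((2 * k) choose k) / 2 ^ (2 * k) = central_binom_ratio k"
    unfolding central_binom_ratio_def by (simp add: power_mult)
  then show ?thesis
    unfolding mean_abs_walk_def n by (simp add: algebra_simps)
next
  case False
  then obtain k where n: "n = 2 * k + 1" using oddE by blast
  then have "Suc n div 2 = Suc k" "n div 2 = k"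
    by auto
  then show ?thesis
    using False unfolding mean_abs_walk_def n by (simp add: central_binom_ratio_Suc field_simps)
qed

lemma walk_sum_abs: "walk_sum n (\<lambda>x. \<bar>real_of_int x\<bar>) = 2 ^ n * mean_abs_walk n"
proof (induction n)
  case 0
  then show ?case by (simp add: walk_sum_def mean_abs_walk_def)
next
  case (Suc n)
  have "\<bar>real_of_int (x + 1)\<bar> + \<bar>real_of_int (x - 1)\<bar>
      = 2 * \<bar>real_of_int x\<bar> + 2 * of_bool (x = 0)" for x
    by (cases "x = 0"; cases "x > 0") auto
  then have "walk_sum (Suc n) (\<lambda>x. \<bar>real_of_int x\<bar>)
      = 2 * walk_sum n (\<lambda>x. \<bar>real_of_int x\<bar>) + 2 * walk_sum n (\<lambda>x. of_bool (x = 0))"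
    by (simp add: walk_sum_Suc flip: walk_sum_add walk_sum_cmult)
  then show ?case
    by (simp add: Suc walk_sum_indicator_0 mean_abs_walk_Suc algebra_simps)
qed

lemma walk_sum_pos_part: "walk_sum n (\<lambda>x. max 0 (real_of_int x)) = 2 ^ n * mean_abs_walk n / 2"
proof -
  have "(\<lambda>x. max 0 (real_of_int x)) = (\<lambda>x. 1/2 * real_of_int x + 1/2 * \<bar>real_of_int x\<bar>)"
    by (auto simp: max_def)
  then show ?thesis
    by (simp only: walk_sum_add walk_sum_cmult walk_sum_of_int walk_sum_abs)
qed

lemma sum_PiE_insert:
  fixes F :: "('a \<Rightarrow> 'b) \<Rightarrow> 'c :: comm_monoid_add"
  assumes "finite U" "a \<notin> U" "finite S"
  shows "(\<Sum>\<sigma>\<in>insert a U \<rightarrow>\<^sub>E S. F \<sigma>) = (\<Sum>s\<in>S. \<Sum>\<tau>\<in>U \<rightarrow>\<^sub>E S. F (\<tau>(a := s)))"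
proof -
  have "(\<Sum>\<sigma>\<in>insert a U \<rightarrow>\<^sub>E S. F \<sigma>) = (\<Sum>(s, \<tau>)\<in>S \<times> (U \<rightarrow>\<^sub>E S). F (\<tau>(a := s)))"
    using assms
    by (intro sum.reindex_bij_witness[of _ "\<lambda>(s, \<tau>). \<tau>(a := s)" "\<lambda>\<sigma>. (\<sigma> a, \<sigma>(a := undefined))"])
       (auto simp: PiE_def extensional_def)
  also have "\<dots> = (\<Sum>s\<in>S. \<Sum>\<tau>\<in>U \<rightarrow>\<^sub>E S. F (\<tau>(a := s)))"
    by (subst sum.cartesian_product) auto
  finally show ?thesis .
qed

lemma sum_signs_eq_walk_sum:
  fixes h :: "real \<Rightarrow> real"
  assumes "finite U" "T \<subseteq> U"
  shows "(\<Sum>\<sigma>\<in>U \<rightarrow>\<^sub>E {-1, 1}. h (\<Sum>t\<in>T. \<sigma> t))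
    = 2 ^ card (U - T) * walk_sum (card T) (\<lambda>x. h (real_of_int x))"
  using assms
proof (induction U arbitrary: T h rule: finite_induct)
  case empty
  then show ?case by (simp add: walk_sum_def)
next
  case (insert a U)
  have "finite T"
    using insert.hyps(1) insert.prems finite_subset by blast
  have split: "(\<Sum>\<sigma>\<in>insert a U \<rightarrow>\<^sub>E {-1, 1}. h (\<Sum>t\<in>T. \<sigma> t))
      = (\<Sum>s\<in>{-1, 1}. \<Sum>\<tau>\<in>U \<rightarrow>\<^sub>E {-1, 1}. h (\<Sum>t\<in>T. (\<tau>(a := s)) t))"
    using insert.hyps by (intro sum_PiE_insert) auto
  show ?case
  proof (cases "a \<in> T")
    case True
    have "(\<Sum>t\<in>T. (\<tau>(a := s)) t) = s + (\<Sum>t\<in>T - {a}. \<tau> t)" for \<tau> :: "'a \<Rightarrow> real" and s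
      using \<open>finite T\<close> True by (simp add: sum.remove[of T a])
    moreover have "insert a U - T = U - (T - {a})"
      using True insert.hyps(2) by auto
    moreover have "card T = Suc (card (T - {a}))"
      using card_Suc_Diff1[OF \<open>finite T\<close> True] by simp
    moreover have "(\<Sum>\<tau>\<in>U \<rightarrow>\<^sub>E {-1, 1}. h (s + (\<Sum>t\<in>T - {a}. \<tau> t)))
        = 2 ^ card (U - (T - {a})) * walk_sum (card (T - {a})) (\<lambda>x. h (s + real_of_int x))" for s
      using insert.prems by (intro insert.IH[of "T - {a}" "\<lambda>y. h (s + y)"]) auto
    ultimately show ?thesis
      unfolding split by (simp add: walk_sum_Suc algebra_simps)
  next
    case False
    have "(\<Sum>t\<in>T. (\<tau>(a := s)) t) = (\<Sum>t\<in>T. \<tau> t)" for \<tau> :: "'a \<Rightarrow> real" and s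
      using False by (intro sum.cong) auto
    moreover have "card (insert a U - T) = Suc (card (U - T))"
      using False insert.hyps by (simp add: insert_Diff_if)
    moreover have "T \<subseteq> U"
      using insert.prems False by auto
    ultimately show ?thesis
      unfolding split by (simp add: insert.IH)
  qed
qed

lemma sum_signs_pos_part:
  assumes "finite U" "T \<subseteq> U"
  shows "(\<Sum>\<sigma>\<in>U \<rightarrow>\<^sub>E {-1, 1}. max 0 (\<Sum>t\<in>T. \<sigma> t))
    = 2 ^ card U * mean_abs_walk (card T) / 2"
proof -
  have "card U = card (U - T) + card T"
    using assms by (simp add: card_Diff_subset card_mono finite_subset)
  then show ?thesis
    using assms by (simp add: sum_signs_eq_walk_sum walk_sum_pos_part power_add)
qed

lemma sqrt_diff_le_of_sq_ge:
  fixes n y :: real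
  assumes "n \<ge> 1" "y \<ge> 0" "n\<^sup>2 \<le> (n + 1) * y\<^sup>2"
  shows "sqrt n - 1 / (2 * sqrt n) \<le> y"
proof (rule power2_le_imp_le)
  have "(sqrt n - 1 / (2 * sqrt n))\<^sup>2 = n - 1 + 1 / (4 * n)"
    using assms(1) by (simp add: power2_diff field_simps)
  moreover have "(n + 1) * (n - 1 + 1 / (4 * n)) \<le> n\<^sup>2"
    using assms(1) by (simp add: field_simps power2_eq_square)
  ultimately have "(n + 1) * (sqrt n - 1 / (2 * sqrt n))\<^sup>2 \<le> (n + 1) * y\<^sup>2"
    using assms(3) by simp
  then show "(sqrt n - 1 / (2 * sqrt n))\<^sup>2 \<le> y\<^sup>2"
    using assms(1) by simp
qed (fact assms(2))

lemma le_sqrt_add_of_sq_le: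
  fixes n y :: real
  assumes "n \<ge> 2" "(n - 1) * y\<^sup>2 \<le> n\<^sup>2"
  shows "y \<le> sqrt n + 1 / sqrt n"
proof (rule power2_le_imp_le)
  have "(sqrt n + 1 / sqrt n)\<^sup>2 = n + 2 + 1 / n"
    using assms(1) by (simp add: power2_sum field_simps power2_eq_square)
  moreover have "n\<^sup>2 \<le> (n - 1) * (n + 2 + 1 / n)"
  proof -
    have "1 + n \<le> n * n"
      using mult_right_mono[of 2 n n] assms(1) by linarith
    then show ?thesis
      using assms(1) by (simp add: field_simps power2_eq_square)
  qed
  ultimately have "(n - 1) * y\<^sup>2 \<le> (n - 1) * (sqrt n + 1 / sqrt n)\<^sup>2"
    using assms(2) by simp
  then show "y\<^sup>2 \<le> (sqrt n + 1 / sqrt n)\<^sup>2"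
    using assms(1) by simp
qed (use assms(1) in simp)

lemma mean_abs_walk_sq_bounds:
  "(real n)\<^sup>2 \<le> (real n + 1) * (pi / 2 * (mean_abs_walk n)\<^sup>2)"
  "(real n - 1) * (pi / 2 * (mean_abs_walk n)\<^sup>2) \<le> (real n)\<^sup>2"
proof -
  define k where "k = n div 2"
  define c where "c = central_binom_ratio k"
  have k: "2 * real k \<le> real n" "real n \<le> 2 * real k + 1"
    unfolding k_def by linarith+
  have M: "pi / 2 * (mean_abs_walk n)\<^sup>2 = (real n)\<^sup>2 * (pi * c\<^sup>2) / 2"
    unfolding mean_abs_walk_def c_def k_def by (simp add: power_mult_distrib)
  have "2 \<le> (2 * real k + 1) * (pi * c\<^sup>2)"
    unfolding c_def using central_binom_ratio_sq_lower by (simp add: mult_ac)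
  also have "\<dots> \<le> (real n + 1) * (pi * c\<^sup>2)"
    using k by (intro mult_right_mono) auto
  finally have "(real n)\<^sup>2 * 2 \<le> (real n)\<^sup>2 * ((real n + 1) * (pi * c\<^sup>2))"
    by (intro mult_left_mono) auto
  then show "(real n)\<^sup>2 \<le> (real n + 1) * (pi / 2 * (mean_abs_walk n)\<^sup>2)"
    unfolding M by (simp add: algebra_simps)
  have "(real n - 1) * (pi * c\<^sup>2) \<le> (2 * real k) * (pi * c\<^sup>2)"
    using k by (intro mult_right_mono) auto
  also have "\<dots> \<le> 2"
    unfolding c_def using central_binom_ratio_sq_upper by (simp add: mult_ac)
  finally have "(real n)\<^sup>2 * ((real n - 1) * (pi * c\<^sup>2)) \<le> (real n)\<^sup>2 * 2"
    by (intro mult_left_mono) auto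
  then show "(real n - 1) * (pi / 2 * (mean_abs_walk n)\<^sup>2) \<le> (real n)\<^sup>2"
    unfolding M by (simp add: algebra_simps)
qed

lemma mean_abs_walk_bounds:
  assumes "n \<ge> 1"
  shows "sqrt n - 1 / (2 * sqrt n) \<le> sqrt (pi / 2) * mean_abs_walk n"
    and "sqrt (pi / 2) * mean_abs_walk n \<le> sqrt n + 1 / sqrt n"
proof -
  have y: "(sqrt (pi / 2) * mean_abs_walk n)\<^sup>2 = pi / 2 * (mean_abs_walk n)\<^sup>2"
    by (simp add: power_mult_distrib)
  show "sqrt n - 1 / (2 * sqrt n) \<le> sqrt (pi / 2) * mean_abs_walk n"
  proof (rule sqrt_diff_le_of_sq_ge)
    show "sqrt (pi / 2) * mean_abs_walk n \<ge> 0"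
      by (simp add: mean_abs_walk_def central_binom_ratio_def)
  qed (use assms mean_abs_walk_sq_bounds(1)[of n] in \<open>simp_all only: y\<close>)
  show "sqrt (pi / 2) * mean_abs_walk n \<le> sqrt n + 1 / sqrt n"
  proof (cases "n = 1")
    case True
    have "sqrt (pi / 2) \<le> sqrt 4"
      using pi_less_4 by (subst real_sqrt_le_iff) simp
    then show ?thesis
      using True by (simp add: mean_abs_walk_def central_binom_ratio_def)
  next
    case False
    show ?thesis
      by (rule le_sqrt_add_of_sq_le)
        (use assms False mean_abs_walk_sq_bounds(2)[of n] in \<open>simp_all only: y\<close>)
  qed
qed

definition positions :: "nat \<Rightarrow> (nat \<Rightarrow> nat) \<Rightarrow> nat \<Rightarrow> nat set" where
  "positions m X i = {t \<in> {1..m}. X t = i}"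

lemma emp_dist_eq_card_positions: "emp_dist m X i = real (card (positions m X i)) / real m"
proof -
  have "(\<Sum>t=1..m. (if X t = i then 1 else 0 :: real)) = real (card (positions m X i))"
    unfolding positions_def by (simp add: sum.If_cases Int_def conj_commute)
  then show ?thesis
    unfolding emp_dist_def by simp
qed

lemma support_emp_dist:
  assumes "m \<ge> 1"
  shows "{i. 0 < emp_dist m X i} = X ` {1..m}"
  using assms
  by (auto simp: emp_dist_eq_card_positions card_gt_0_iff positions_def zero_less_divide_iff)

lemma card_positions_pos: "i \<in> X ` {1..m} \<Longrightarrow> card (positions m X i) \<ge> 1"
  by (auto simp: positions_def Suc_le_eq card_gt_0_iff)

lemma sum_regroup_by_value:
  fixes \<sigma> f :: "nat \<Rightarrow> real"
  shows "(\<Sum>t=1..m. \<sigma> t * f (X t)) = (\<Sum>i\<in>X ` {1..m}. f i * (\<Sum>t\<in>positions m X i. \<sigma> t))"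
proof -
  have "(\<Sum>t=1..m. \<sigma> t * f (X t)) = (\<Sum>i\<in>X ` {1..m}. \<Sum>t\<in>positions m X i. \<sigma> t * f (X t))"
    unfolding positions_def by (rule sum.image_gen) simp
  also have "\<dots> = (\<Sum>i\<in>X ` {1..m}. f i * (\<Sum>t\<in>positions m X i. \<sigma> t))"
    by (intro sum.cong refl) (auto simp: positions_def sum_distrib_left mult.commute)
  finally show ?thesis .
qed

lemma SUP_binary_correlation:
  fixes \<sigma> :: "nat \<Rightarrow> real"
  shows "(SUP f\<in>{f::nat \<Rightarrow> real. \<forall>x. f x \<in> {0,1}}. (1 / real m) * (\<Sum>t=1..m. \<sigma> t * f (X t)))
       = (1 / real m) * (\<Sum>i\<in>X ` {1..m}. max 0 (\<Sum>t\<in>positions m X i. \<sigma> t))"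
proof (rule cSup_eq_maximum)
  define f\<^sub>0 :: "nat \<Rightarrow> real" where "f\<^sub>0 i = of_bool ((\<Sum>t\<in>positions m X i. \<sigma> t) > 0)" for i
  have "(\<Sum>t=1..m. \<sigma> t * f\<^sub>0 (X t)) = (\<Sum>i\<in>X ` {1..m}. max 0 (\<Sum>t\<in>positions m X i. \<sigma> t))"
    unfolding sum_regroup_by_value by (intro sum.cong) (auto simp: f\<^sub>0_def)
  moreover have "f\<^sub>0 \<in> {f. \<forall>x. f x \<in> {0,1}}"
    unfolding f\<^sub>0_def by auto
  ultimately show "(1 / real m) * (\<Sum>i\<in>X ` {1..m}. max 0 (\<Sum>t\<in>positions m X i. \<sigma> t))
      \<in> (\<lambda>f. (1 / real m) * (\<Sum>t=1..m. \<sigma> t * f (X t))) ` {f. \<forall>x. f x \<in> {0,1}}"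
    by (metis (mono_tags, lifting) image_eqI)
next
  fix y
  assume "y \<in> (\<lambda>f. (1 / real m) * (\<Sum>t=1..m. \<sigma> t * f (X t))) ` {f. \<forall>x. f x \<in> {0,1}}"
  then obtain f where f: "\<forall>x. f x \<in> {0,1}" and y: "y = (1 / real m) * (\<Sum>t=1..m. \<sigma> t * f (X t))"
    by auto
  have "(\<Sum>i\<in>X ` {1..m}. f i * (\<Sum>t\<in>positions m X i. \<sigma> t))
      \<le> (\<Sum>i\<in>X ` {1..m}. max 0 (\<Sum>t\<in>positions m X i. \<sigma> t))"
    using f by (intro sum_mono) (metis insert_iff max.cobounded1 max.cobounded2 mult_1 mult_zero_left singletonD)
  then show "y \<le> (1 / real m) * (\<Sum>i\<in>X ` {1..m}. max 0 (\<Sum>t\<in>positions m X i. \<sigma> t))"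
    unfolding y sum_regroup_by_value by (intro mult_left_mono) auto
qed

lemma emp_rademacher_eq_sum_mean_abs_walk:
  "emp_rademacher m X = (\<Sum>i\<in>X ` {1..m}. mean_abs_walk (card (positions m X i))) / (2 * real m)"
proof -
  let ?S = "\<lambda>\<sigma> i. max 0 (\<Sum>t\<in>positions m X i. \<sigma> t)"
  have atom: "(\<Sum>\<sigma>\<in>{1..m} \<rightarrow>\<^sub>E {-1, 1}. ?S \<sigma> i)
      = 2 ^ m * mean_abs_walk (card (positions m X i)) / 2" for i
  proof -
    have "positions m X i \<subseteq> {1..m}"
      by (auto simp: positions_def)
    from sum_signs_pos_part[OF _ this] show ?thesis
      by simp
  qed
  have "emp_rademacher m X = (\<Sum>\<sigma>\<in>{1..m} \<rightarrow>\<^sub>E {-1, 1}. \<Sum>i\<in>X ` {1..m}. ?S \<sigma> i) / (real m * 2 ^ m)"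
    unfolding emp_rademacher_def SUP_binary_correlation
    by (simp add: divide_divide_eq_left flip: sum_divide_distrib)
  also have "\<dots> = (\<Sum>i\<in>X ` {1..m}. \<Sum>\<sigma>\<in>{1..m} \<rightarrow>\<^sub>E {-1, 1}. ?S \<sigma> i) / (real m * 2 ^ m)"
    by (subst sum.swap) (rule refl)
  also have "\<dots>
      = (\<Sum>i\<in>X ` {1..m}. 2 ^ m * mean_abs_walk (card (positions m X i)) / 2) / (real m * 2 ^ m)"
    by (simp only: atom)
  finally show ?thesis
    by (simp add: sum_divide_distrib flip: sum_distrib_left)
qed

lemma mean_abs_walk_atom_bounds:
  assumes "n \<ge> 1" "m \<ge> 1"
  defines "p \<equiv> real n / real m"
  shows "sqrt p / sqrt (2 * pi * real m) - 3/2 * sqrt (1 / (2 * pi)) * (1 / real m powr (3/2)) * p powr (-1/2)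
           \<le> mean_abs_walk n / (2 * real m)"
    and "mean_abs_walk n / (2 * real m)
           \<le> sqrt p / sqrt (2 * pi * real m) + sqrt (1 / (2 * pi)) * (1 / real m powr (3/2)) * p powr (-1/2)"
proof -
  define c where "c = 1 / (real m * sqrt (2 * pi))"
  have "c \<ge> 0"
    unfolding c_def by simp
  have "real m powr (3/2) = real m * sqrt m"
    using assms(2) by (simp add: powr_add[of _ 1 "1/2", simplified] powr_half_sqrt)
  moreover have "p powr (-1/2) = sqrt m / sqrt n"
    using assms(1,2) unfolding p_def by (simp add: powr_minus_divide powr_half_sqrt real_sqrt_divide)
  ultimately have tail: "sqrt (1 / (2 * pi)) * (1 / real m powr (3/2)) * p powr (-1/2) = c / sqrt n"
    using assms(2) unfolding c_def by (simp add: real_sqrt_divide field_simps)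
  have main: "sqrt p / sqrt (2 * pi * real m) = c * sqrt n"
    using assms(2) unfolding p_def c_def by (simp add: real_sqrt_divide real_sqrt_mult field_simps)
  have "mean_abs_walk n / (2 * real m) = c * (sqrt (pi / 2) * mean_abs_walk n)"
    unfolding c_def by (simp add: real_sqrt_divide real_sqrt_mult field_simps)
  \<comment> \<open>The constant 3/2 of the statement is weaker than the 1/2 of mean_abs_walk_bounds.\<close>
  moreover have "c * (sqrt n - 3 / (2 * sqrt n)) \<le> c * (sqrt n - 1 / (2 * sqrt n))"
    using \<open>c \<ge> 0\<close> by (intro mult_left_mono) (auto simp: field_simps)
  ultimately show "sqrt p / sqrt (2 * pi * real m) - 3/2 * sqrt (1 / (2 * pi)) * (1 / real m powr (3/2)) * p powr (-1/2)
           \<le> mean_abs_walk n / (2 * real m)"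
    and "mean_abs_walk n / (2 * real m)
           \<le> sqrt p / sqrt (2 * pi * real m) + sqrt (1 / (2 * pi)) * (1 / real m powr (3/2)) * p powr (-1/2)"
    using mult_left_mono[OF mean_abs_walk_bounds(1)[OF assms(1)] \<open>c \<ge> 0\<close>]
      mult_left_mono[OF mean_abs_walk_bounds(2)[OF assms(1)] \<open>c \<ge> 0\<close>]
    unfolding mult.assoc[of "3/2"] tail main by (simp_all add: algebra_simps)
qed

theorem corollary1:
  fixes m :: nat and X :: "nat \<Rightarrow> nat"
  assumes "m \<ge> 1"
  shows "sqrt (half_norm (emp_dist m X)) / sqrt (2 * pi * real m)
           - 3/2 * sqrt (1 / (2 * pi)) * (1 / real m powr (3/2)) * Nfun (emp_dist m X)
         \<le> emp_rademacher m X \<and>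
         emp_rademacher m X
         \<le> sqrt (half_norm (emp_dist m X)) / sqrt (2 * pi * real m)
           + sqrt (1 / (2 * pi)) * (1 / real m powr (3/2)) * Nfun (emp_dist m X)"
proof -
  let ?S = "X ` {1..m}"
  let ?n = "\<lambda>i. card (positions m X i)"
  let ?p = "\<lambda>i. real (?n i) / real m"
  let ?a = "\<lambda>i. sqrt (?p i) / sqrt (2 * pi * real m)"
  let ?b = "\<lambda>i. sqrt (1 / (2 * pi)) * (1 / real m powr (3/2)) * ?p i powr (-1/2)"
  let ?r = "\<lambda>i. mean_abs_walk (?n i) / (2 * real m)"
  have "sqrt (half_norm (emp_dist m X)) = (\<Sum>i\<in>?S. sqrt (?p i))"
    unfolding half_norm_def support_emp_dist[OF assms]
    by (simp add: sum_nonneg emp_dist_eq_card_positions)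
  moreover have "Nfun (emp_dist m X) = (\<Sum>i\<in>?S. ?p i powr (-1/2))"
    unfolding Nfun_def support_emp_dist[OF assms] by (simp only: emp_dist_eq_card_positions)
  moreover have "emp_rademacher m X = (\<Sum>i\<in>?S. ?r i)"
    unfolding emp_rademacher_eq_sum_mean_abs_walk by (simp add: sum_divide_distrib)
  moreover have "(\<Sum>i\<in>?S. ?a i - 3/2 * ?b i) \<le> (\<Sum>i\<in>?S. ?r i)"
    and "(\<Sum>i\<in>?S. ?r i) \<le> (\<Sum>i\<in>?S. ?a i + ?b i)"
    using mean_abs_walk_atom_bounds[OF card_positions_pos assms] by (auto intro: sum_mono simp: mult.assoc)
  ultimately show ?thesis
    by (simp add: sum_divide_distrib sum_distrib_left sum_subtractf sum.distrib mult.assoc)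
qed

end
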